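(* Let $a\in(0,1)$ and define the linear operator $T_a$ on complex-valued $L^1(\mathbb{R})$ by $T_a[f](y)=\int_{-\infty}^{\infty}\mathsf{sign}(x-ay)\,\phi(y-x)\,f(x)\,\mathrm{d}x$, with $\phi$ the standard Gaussian density. Let $\mathcal{N}_{L^1}(T_a)=\{f\in L^1(\mathbb{R}): T_a[f]=0\}$. Then $\mathcal{N}_{L^1}(T_a)$ is infinite-dimensional. Moreover, $$\mathrm{span}\left\{f_{\mu_n,\frac{a}{1-a},\omega_n} : (\mu_n,\omega_n)\in\mathbb{R}^2,\ \tfrac{1}{\sqrt2}\Big(\tfrac{1-a}{\sqrt a}\mu_n+j\sqrt a\,\omega_n\Big)\text{ is a zero of }\mathrm{erf}\right\}\subseteq\mathcal{N}_{L^1}(T_a),$$ where $f_{\mu,\sigma^2,\omega}(x)=\exp\!\left(-\frac{(x-\mu)^2}{2\sigma^2}\right)e^{jx\omega}$.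
   Context: $j=\sqrt{-1}$. $\mathrm{erf}(z)=\frac{2}{\sqrt\pi}\int_0^z e^{-t^2}\mathrm{d}t$ is the entire error function on $\mathbb{C}$; it has infinitely many complex zeros. *)

theory Defs
  imports "HOL-Complex_Analysis.Complex_Analysis"
begin

definition cerf :: "complex \<Rightarrow> complex" where
  "cerf z = (2 / complex_of_real (sqrt pi)) * contour_integral (linepath 0 z) (\<lambda>t. exp (- (t^2)))"

definition gauss_pdf :: "real \<Rightarrow> real" where
  "gauss_pdf x = exp (- (x^2) / 2) / sqrt (2 * pi)"

definition T_op :: "real \<Rightarrow> (real \<Rightarrow> complex) \<Rightarrow> real \<Rightarrow> complex" where
  "T_op a f y = (LINT x|lborel. complex_of_real (sgn (x - a * y) * gauss_pdf (y - x)) * f x)"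

definition null_L1 :: "real \<Rightarrow> (real \<Rightarrow> complex) set" where
  "null_L1 a = {f. integrable lborel f \<and> (\<forall>y. T_op a f y = 0)}"

definition gfun :: "real \<Rightarrow> real \<Rightarrow> real \<Rightarrow> real \<Rightarrow> complex" where
  "gfun \<mu> s2 \<omega> x = complex_of_real (exp (- ((x - \<mu>)^2) / (2 * s2))) * exp (\<i> * complex_of_real (x * \<omega>))"

definition cspan :: "('a \<Rightarrow> complex) set \<Rightarrow> ('a \<Rightarrow> complex) set" where
  "cspan S = {(\<lambda>x. \<Sum>g\<in>F. c g * g x) | F c. finite F \<and> F \<subseteq> S}"

end

(* Completing the square in x, the integrand of T_a f_{mu,a/(1-a),omega} at y is
   sgn(x - a y) exp(K(y)) exp(-(x - zeta)^2 / (2a)) with the complex centre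
   zeta = a y + (1 - a) mu + j a omega.  Splitting the integral at x = a y and using the
   primitive of exp(-t^2), one gets T_a f(y) = sqrt a exp(K(y)) erf(z) with
   z = (zeta - a y) / sqrt(2a), which does not depend on y; so each zero z of erf gives a
   null vector.  There are infinitely many zeros: otherwise erf = P e^q with P a polynomial
   and q quadratic (a zero-free entire function of order two is the exponential of a
   quadratic, by Borel-Caratheodory and Liouville), and differentiating would make P' + P q'
   a nowhere vanishing polynomial of positive degree.  Distinct zeros give Gaussians
   exp(-x^2 (1-a)/(2a)) e^(lambda x) with distinct exponents lambda, and such exponentials
   are linearly independent. *)

theory Submission
  imports Defs "HOL-Probability.Distributions" "HOL-Computational_Algebra.Fundamental_Theorem_Algebra"
    "HOL-Real_Asymp.Real_Asymp"
begin

section \<open>The primitive of exp(-z^2)\<close>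

definition gauss_prim :: "complex \<Rightarrow> complex" where
  "gauss_prim z = contour_integral (linepath 0 z) (\<lambda>t. exp (- (t^2)))"

lemma cerf_eq_gauss_prim: "cerf z = 2 / complex_of_real (sqrt pi) * gauss_prim z"
  by (simp add: cerf_def gauss_prim_def)

lemma gauss_prim_has_contour_integral:
    "((\<lambda>t. exp (- (t^2))) has_contour_integral (gauss_prim w - gauss_prim v)) (linepath v w)"
  and DERIV_gauss_prim: "(gauss_prim has_field_derivative exp (- (z^2))) (at z)"
proof -
  have "(\<lambda>t::complex. exp (- (t^2))) holomorphic_on UNIV"
    by (intro holomorphic_intros)
  from holomorphic_convex_primitive'[OF convex_UNIV open_UNIV this]
  obtain G :: "complex \<Rightarrow> complex" where G: "\<And>z. (G has_field_derivative exp (- (z^2))) (at z)"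
    by (metis UNIV_I)
  have G_integral: "((\<lambda>t. exp (- (t^2))) has_contour_integral (G w - G v)) (linepath v w)" for v w
    using contour_integral_primitive[of UNIV G, OF G, of "linepath v w"] by simp
  have gauss_prim_eq: "gauss_prim = (\<lambda>z. G z - G 0)"
    using contour_integral_unique[OF G_integral] by (simp add: gauss_prim_def fun_eq_iff)
  show "((\<lambda>t. exp (- (t^2))) has_contour_integral (gauss_prim w - gauss_prim v)) (linepath v w)"
    using G_integral by (simp add: gauss_prim_eq)
  show "(gauss_prim has_field_derivative exp (- (z^2))) (at z)"
    unfolding gauss_prim_eq using DERIV_diff[OF G[of z] DERIV_const[of "G 0"]] by simp
qed

lemma gauss_prim_0 [simp]: "gauss_prim 0 = 0"
  by (simp add: gauss_prim_def)

lemma holomorphic_gauss_prim: "gauss_prim holomorphic_on S"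
  using DERIV_gauss_prim field_differentiable_at_within
  by (metis field_differentiable_def holomorphic_on_def)

lemma gauss_prim_minus: "gauss_prim (- z) = - gauss_prim z"
proof -
  have "((\<lambda>z. gauss_prim (- z) + gauss_prim z) has_field_derivative 0) (at z)" for z
  proof -
    have "((\<lambda>z. gauss_prim (- z) + gauss_prim z) has_field_derivative
            exp (- ((- z)^2)) * (- 1) + exp (- (z^2))) (at z)"
      by (rule derivative_eq_intros DERIV_chain2[OF DERIV_gauss_prim] DERIV_gauss_prim refl)+
    then show ?thesis by simp
  qed
  then obtain c where "\<And>z. gauss_prim (- z) + gauss_prim z = c"
    using has_field_derivative_zero_constant[of UNIV "\<lambda>z. gauss_prim (- z) + gauss_prim z"] by auto
  from this[of z] this[of 0] show ?thesis
    by (simp add: eq_neg_iff_add_eq_0)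
qed

lemma norm_gauss_prim_le: "norm (gauss_prim z) \<le> exp (2 * norm z ^ 2)"
proof -
  have "norm (gauss_prim z - gauss_prim 0) \<le> exp (norm z ^ 2) * norm (z - 0)"
  proof (rule has_contour_integral_bound_linepath[OF gauss_prim_has_contour_integral])
    fix t assume "t \<in> closed_segment 0 z"
    then have "norm t \<le> norm z"
      by (metis closed_segment_commute diff_zero dist_0_norm dist_commute segment_bound1)
    then have "norm t ^ 2 \<le> norm z ^ 2"
      by (simp add: power_mono)
    moreover have "Re (- (t^2)) \<le> norm t ^ 2"
      using abs_Re_le_cmod[of "- (t^2)"] by (simp add: norm_power)
    ultimately have "Re (- (t^2)) \<le> norm z ^ 2"
      by linarith
    then show "norm (exp (- (t^2))) \<le> exp (norm z ^ 2)"
      by (simp add: norm_exp)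
  qed auto
  also have "\<dots> \<le> exp (norm z ^ 2) * exp (norm z ^ 2)"
  proof -
    have "2 * norm z \<le> 1 + norm z ^ 2"
      using zero_le_power2[of "norm z - 1"] by (simp add: power2_diff)
    then have "norm z \<le> 1 + norm z ^ 2"
      using norm_ge_zero[of z] by linarith
    also have "\<dots> \<le> exp (norm z ^ 2)"
      by (rule exp_ge_add_one_self)
    finally show ?thesis by simp
  qed
  finally show ?thesis
    by (simp flip: exp_add)
qed

lemma Re_power2_ge:
  fixes t :: complex
  assumes "norm (t - complex_of_real m) \<le> r" "r \<le> m"
  shows "(m - r)^2 - r^2 \<le> Re (t^2)"
proof -
  have Re: "\<bar>Re t - m\<bar> \<le> r" and Im: "\<bar>Im t\<bar> \<le> r"
    using abs_Re_le_cmod[of "t - complex_of_real m"] abs_Im_le_cmod[of "t - complex_of_real m"] assms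
    by auto
  have "(m - r)^2 \<le> (Re t)^2"
    using Re assms(2) by (intro power_mono) auto
  moreover have "(Im t)^2 \<le> r^2"
    using Im abs_le_square_iff[of "Im t" r] by auto
  ultimately show ?thesis
    by (simp add: power2_eq_square)
qed

lemma gauss_prim_symmetric_diff_tendsto_0:
  "((\<lambda>t. gauss_prim (complex_of_real t + c) - gauss_prim (complex_of_real t - c)) \<longlongrightarrow> 0) at_top"
proof (rule Lim_null_comparison)
  let ?r = "norm c"
  show "\<forall>\<^sub>F t in at_top. norm (gauss_prim (complex_of_real t + c) - gauss_prim (complex_of_real t - c))
          \<le> exp (- (t * (t - 2 * ?r))) * (2 * ?r)"
  proof (rule eventually_at_top_linorderI)
    fix t :: real assume t: "?r \<le> t"
    have "norm (gauss_prim (t + c) - gauss_prim (t - c)) \<le> exp (- (t * (t - 2 * ?r))) * norm ((t + c) - (t - c))"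
    proof (rule has_contour_integral_bound_linepath[OF gauss_prim_has_contour_integral])
      fix z assume "z \<in> closed_segment (t - c) (t + c)"
      moreover have "closed_segment (t - c) (t + c) \<subseteq> cball (complex_of_real t) ?r"
        by (intro closed_segment_subset) (auto simp: dist_norm)
      ultimately have "norm (z - complex_of_real t) \<le> ?r"
        by (auto simp: dist_norm norm_minus_commute)
      from Re_power2_ge[OF this t] show "norm (exp (- (z^2))) \<le> exp (- (t * (t - 2 * ?r)))"
        by (simp add: norm_exp power2_eq_square algebra_simps)
    qed auto
    then show "norm (gauss_prim (t + c) - gauss_prim (t - c)) \<le> exp (- (t * (t - 2 * ?r))) * (2 * ?r)"
      by (simp add: norm_mult)
  qed
  show "((\<lambda>t. exp (- (t * (t - 2 * ?r))) * (2 * ?r)) \<longlongrightarrow> 0) at_top"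
    by real_asymp
qed

section \<open>Integrals against sgn(x - b)\<close>

lemma tendsto_set_integral_Icc_symmetric:
  fixes f :: "real \<Rightarrow> 'a::{banach, second_countable_topology}"
  assumes f: "integrable lborel f"
  shows "((\<lambda>n. LINT x:{-n..n}|lborel. f x) \<longlongrightarrow> integral\<^sup>L lborel f) at_top"
  unfolding set_lebesgue_integral_def
proof (rule integral_dominated_convergence_at_top[where w = "\<lambda>x. norm (f x)"])
  show "AE x in lborel. ((\<lambda>n. indicator {-n..n} x *\<^sub>R f x) \<longlongrightarrow> f x) at_top"
  proof (intro AE_I2 tendsto_eventually)
    fix x :: real
    show "\<forall>\<^sub>F n in at_top. indicator {-n..n} x *\<^sub>R f x = f x"
      by (rule eventually_at_top_linorderI[of "\<bar>x\<bar>"]) (auto simp: indicator_def)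
  qed
  show "\<forall>\<^sub>F n in at_top. AE x in lborel. norm (indicator {-n..n} x *\<^sub>R f x) \<le> norm (f x)"
    by (intro always_eventually allI AE_I2) (simp add: indicator_def)
qed (use f in auto)

lemma integrable_bounded_scaleR:
  fixes f :: "'a \<Rightarrow> 'b::{banach, second_countable_topology}"
  assumes f: "integrable M f" and g: "g \<in> borel_measurable M" and bound: "\<And>x. \<bar>g x\<bar> \<le> B"
  shows "integrable M (\<lambda>x. g x *\<^sub>R f x)"
proof (rule Bochner_Integration.integrable_bound)
  show "integrable M (\<lambda>x. B * norm (f x))"
    using f by auto
  show "AE x in M. norm (g x *\<^sub>R f x) \<le> norm (B * norm (f x))"
    using bound by (intro AE_I2) (auto intro!: mult_right_mono order_trans[OF _ abs_ge_self])
qed (use f g in auto)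

lemma has_integral_sgn_scaleR:
  fixes F f :: "real \<Rightarrow> 'a::banach"
  assumes deriv: "\<And>x. (F has_vector_derivative f x) (at x)" and ab: "a \<le> b" and bc: "b \<le> c"
  shows "((\<lambda>x. sgn (x - b) *\<^sub>R f x) has_integral (F c + F a - 2 *\<^sub>R F b)) {a..c}"
proof -
  have "(f has_integral (F b - F a)) {a..b}"
    using fundamental_theorem_of_calculus[OF ab] deriv has_vector_derivative_at_within by blast
  from has_integral_neg[OF this]
  have left: "((\<lambda>x. sgn (x - b) *\<^sub>R f x) has_integral - (F b - F a)) {a..b}"
    by (rule has_integral_spike_finite[of "{b}", rotated 2]) auto
  have "(f has_integral (F c - F b)) {b..c}"
    using fundamental_theorem_of_calculus[OF bc] deriv has_vector_derivative_at_within by blast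
  then have right: "((\<lambda>x. sgn (x - b) *\<^sub>R f x) has_integral (F c - F b)) {b..c}"
    by (rule has_integral_spike_finite[of "{b}", rotated 2]) auto
  from has_integral_combine[OF ab bc left right] show ?thesis
    by (simp add: algebra_simps scaleR_2)
qed

(* Only the symmetric sums F t + F (- t) need to converge, not F itself at infinity. *)
lemma lborel_integral_sgn_scaleR:
  fixes F f :: "real \<Rightarrow> 'a::euclidean_space"
  assumes deriv: "\<And>x. (F has_vector_derivative f x) (at x)" and f: "integrable lborel f"
    and lim: "((\<lambda>t. F t + F (- t)) \<longlongrightarrow> 0) at_top"
  shows "(LINT x|lborel. sgn (x - b) *\<^sub>R f x) = - 2 *\<^sub>R F b"
proof -
  let ?g = "\<lambda>x. sgn (x - b) *\<^sub>R f x"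
  have g: "integrable lborel ?g"
    by (rule integrable_bounded_scaleR[OF f, where B = 1]) auto
  have "\<forall>\<^sub>F n in at_top. F n + F (- n) - 2 *\<^sub>R F b = (LINT x:{-n..n}|lborel. ?g x)"
  proof (rule eventually_at_top_linorderI[of "\<bar>b\<bar>"])
    fix n assume "\<bar>b\<bar> \<le> n"
    then have "(?g has_integral (F n + F (- n) - 2 *\<^sub>R F b)) {-n..n}"
      by (intro has_integral_sgn_scaleR deriv) auto
    moreover have "set_integrable lborel {-n..n} ?g"
      unfolding set_integrable_def by (rule integrable_mult_indicator[OF _ g]) auto
    ultimately show "F n + F (- n) - 2 *\<^sub>R F b = (LINT x:{-n..n}|lborel. ?g x)"
      by (simp add: set_borel_integral_eq_integral(2) integral_unique)
  qed
  moreover have "((\<lambda>n. F n + F (- n) - 2 *\<^sub>R F b) \<longlongrightarrow> 0 - 2 *\<^sub>R F b) at_top"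
    using lim by (intro tendsto_intros)
  ultimately have "((\<lambda>n. LINT x:{-n..n}|lborel. ?g x) \<longlongrightarrow> - 2 *\<^sub>R F b) at_top"
    using Lim_transform_eventually by fastforce
  with tendsto_set_integral_Icc_symmetric[OF g] show ?thesis
    by (rule tendsto_unique[OF trivial_limit_at_top_linorder])
qed

lemma integrable_exp_neg_sq:
  fixes m s :: real
  assumes "s > 0"
  shows "integrable lborel (\<lambda>x. exp (- ((x - m)^2) / s^2))"
proof -
  define \<sigma> where "\<sigma> = s / sqrt 2"
  have \<sigma>: "\<sigma> > 0" "2 * \<sigma>^2 = s^2"
    using assms by (auto simp: \<sigma>_def power_divide)
  have "integrable lborel (\<lambda>x. sqrt (2 * pi * \<sigma>^2) * normal_density m \<sigma> x)"
    using \<sigma> by auto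
  moreover have "sqrt (2 * pi * \<sigma>^2) * normal_density m \<sigma> x = exp (- ((x - m)^2) / s^2)" for x
    using \<sigma> by (simp add: normal_density_def)
  ultimately show ?thesis
    by simp
qed

lemma integrable_complex_gauss:
  fixes \<zeta> :: complex and s :: real
  assumes s: "s > 0"
  shows "integrable lborel (\<lambda>x. exp (- (((complex_of_real x - \<zeta>) / complex_of_real s)^2)))"
proof (rule Bochner_Integration.integrable_bound)
  show "integrable lborel (\<lambda>x. exp ((Im \<zeta>)^2 / s^2) * exp (- ((x - Re \<zeta>)^2) / s^2))"
    using integrable_exp_neg_sq[OF s] by auto
  have "Re (- (((complex_of_real x - \<zeta>) / complex_of_real s)^2)) = (Im \<zeta>)^2 / s^2 + - ((x - Re \<zeta>)^2) / s^2" for x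
    using s by (simp add: power2_eq_square field_simps)
  then show "AE x in lborel. norm (exp (- (((complex_of_real x - \<zeta>) / complex_of_real s)^2)))
      \<le> norm (exp ((Im \<zeta>)^2 / s^2) * exp (- ((x - Re \<zeta>)^2) / s^2))"
    by (simp add: norm_exp flip: exp_add)
qed measurable

lemma has_vector_derivative_gauss_prim_scaled:
  fixes \<zeta> :: complex and s :: real
  assumes "s \<noteq> 0"
  shows "((\<lambda>x. complex_of_real s * gauss_prim ((complex_of_real x - \<zeta>) / complex_of_real s))
          has_vector_derivative exp (- (((complex_of_real x - \<zeta>) / complex_of_real s)^2))) (at x)"
proof -
  have "((\<lambda>z. (z - \<zeta>) / complex_of_real s) has_field_derivative 1 / complex_of_real s) (at z)" for z
    using assms by (auto intro!: derivative_eq_intros)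
  from DERIV_cmult[OF DERIV_chain2[OF DERIV_gauss_prim this], of "complex_of_real s"]
  have "((\<lambda>z. complex_of_real s * gauss_prim ((z - \<zeta>) / complex_of_real s)) has_field_derivative
          exp (- (((z - \<zeta>) / complex_of_real s)^2))) (at z)" for z
    using assms by simp
  then show ?thesis
    by (rule has_vector_derivative_real_field)
qed

lemma lborel_integral_sgn_complex_gauss:
  fixes \<zeta> :: complex and s b :: real
  assumes s: "s > 0"
  shows "(LINT x|lborel. sgn (x - b) *\<^sub>R exp (- (((complex_of_real x - \<zeta>) / complex_of_real s)^2)))
       = 2 * complex_of_real s * gauss_prim ((\<zeta> - complex_of_real b) / complex_of_real s)"
proof -
  define F where "F x = complex_of_real s * gauss_prim ((complex_of_real x - \<zeta>) / complex_of_real s)" for x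
  have F_sym: "F t + F (- t) = - complex_of_real s *
      (gauss_prim (complex_of_real (t / s) + \<zeta> / s) - gauss_prim (complex_of_real (t / s) - \<zeta> / s))" for t
  proof -
    have minus_t: "(complex_of_real (- t) - \<zeta>) / complex_of_real s = - (complex_of_real (t / s) + \<zeta> / s)"
      and plus_t: "(complex_of_real t - \<zeta>) / complex_of_real s = complex_of_real (t / s) - \<zeta> / s"
      using s by (simp_all add: field_simps)
    show ?thesis
      unfolding F_def minus_t plus_t gauss_prim_minus by (simp add: algebra_simps)
  qed
  have "((\<lambda>t. gauss_prim (complex_of_real (t / s) + \<zeta> / s)
      - gauss_prim (complex_of_real (t / s) - \<zeta> / s)) \<longlongrightarrow> 0) at_top"
    using s by (intro filterlim_compose[OF gauss_prim_symmetric_diff_tendsto_0]) real_asymp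
  then have "((\<lambda>t. F t + F (- t)) \<longlongrightarrow> 0) at_top"
    unfolding F_sym by (rule tendsto_mult_right_zero)
  from lborel_integral_sgn_scaleR[OF _ integrable_complex_gauss[OF s] this]
  have "(LINT x|lborel. sgn (x - b) *\<^sub>R exp (- (((complex_of_real x - \<zeta>) / complex_of_real s)^2))) = - 2 *\<^sub>R F b"
    using has_vector_derivative_gauss_prim_scaled[of s] s unfolding F_def by simp
  also have "(complex_of_real b - \<zeta>) / complex_of_real s = - ((\<zeta> - complex_of_real b) / complex_of_real s)"
    by (metis minus_diff_eq minus_divide_left)
  then have "- 2 *\<^sub>R F b = 2 * complex_of_real s * gauss_prim ((\<zeta> - complex_of_real b) / complex_of_real s)"
    by (simp add: F_def gauss_prim_minus scaleR_conv_of_real)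
  finally show ?thesis .
qed

section \<open>The operator applied to Gaussians\<close>

definition erf_point :: "real \<Rightarrow> real \<Rightarrow> real \<Rightarrow> complex" where
  "erf_point a \<mu> \<omega> = (1 / complex_of_real (sqrt 2)) *
     (complex_of_real ((1 - a) / sqrt a * \<mu>) + \<i> * complex_of_real (sqrt a * \<omega>))"

lemma integrable_gfun:
  assumes "s2 > 0"
  shows "integrable lborel (gfun \<mu> s2 \<omega>)"
proof (rule Bochner_Integration.integrable_bound)
  have s: "sqrt (2 * s2) > 0" "sqrt (2 * s2) ^ 2 = 2 * s2"
    using assms by auto
  show "integrable lborel (\<lambda>x. exp (- ((x - \<mu>)^2) / sqrt (2 * s2) ^ 2))"
    using integrable_exp_neg_sq[OF s(1)] .
  show "AE x in lborel. norm (gfun \<mu> s2 \<omega> x) \<le> norm (exp (- ((x - \<mu>)^2) / sqrt (2 * s2) ^ 2))"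
    using s by (simp add: gfun_def norm_mult)
qed (unfold gfun_def, measurable)

(* Completing the square in x. *)
lemma T_op_integrand_gfun:
  fixes a \<mu> \<omega> x y :: real
  assumes a: "0 < a" "a < 1"
  defines "\<zeta> \<equiv> complex_of_real (a * y + (1 - a) * \<mu>) + \<i> * complex_of_real (a * \<omega>)"
  defines "K \<equiv> complex_of_real (- (y^2) / 2 - (1 - a) * \<mu>^2 / (2 * a)) + \<zeta>^2 / complex_of_real (2 * a)"
  shows "complex_of_real (sgn (x - a * y) * gauss_pdf (y - x)) * gfun \<mu> (a / (1 - a)) \<omega> x
      = exp K / complex_of_real (sqrt (2 * pi)) *
        (sgn (x - a * y) *\<^sub>R exp (- (((complex_of_real x - \<zeta>) / complex_of_real (sqrt (2 * a)))^2)))"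
proof -
  have "complex_of_real (sqrt (2 * a)) ^ 2 = complex_of_real (2 * a)"
    using a by (simp flip: of_real_power)
  then have "complex_of_real (- ((y - x)^2) / 2) + complex_of_real (- ((x - \<mu>)^2) / (2 * (a / (1 - a))))
        + \<i> * complex_of_real (x * \<omega>) = K + - (((complex_of_real x - \<zeta>) / complex_of_real (sqrt (2 * a)))^2)"
    using a unfolding K_def \<zeta>_def power_divide by (simp add: complex_eq_iff power2_eq_square field_simps)
  then have "exp (complex_of_real (- ((y - x)^2) / 2)) * exp (complex_of_real (- ((x - \<mu>)^2) / (2 * (a / (1 - a)))))
        * exp (\<i> * complex_of_real (x * \<omega>))
      = exp K * exp (- (((complex_of_real x - \<zeta>) / complex_of_real (sqrt (2 * a)))^2))"
    by (simp only: exp_add[symmetric])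
  then show ?thesis
    unfolding gauss_pdf_def gfun_def by (simp add: scaleR_conv_of_real mult_ac flip: exp_of_real)
qed

lemma T_op_gfun:
  fixes a \<mu> \<omega> y :: real
  assumes a: "0 < a" "a < 1"
  defines "\<zeta> \<equiv> complex_of_real (a * y + (1 - a) * \<mu>) + \<i> * complex_of_real (a * \<omega>)"
  defines "K \<equiv> complex_of_real (- (y^2) / 2 - (1 - a) * \<mu>^2 / (2 * a)) + \<zeta>^2 / complex_of_real (2 * a)"
  shows "T_op a (gfun \<mu> (a / (1 - a)) \<omega>) y = complex_of_real (sqrt a) * exp K * cerf (erf_point a \<mu> \<omega>)"
proof -
  define s where "s = sqrt (2 * a)"
  have "s > 0"
    using a by (simp add: s_def)
  have kernel: "complex_of_real (sgn (x - a * y) * gauss_pdf (y - x)) * gfun \<mu> (a / (1 - a)) \<omega> x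
      = exp K / complex_of_real (sqrt (2 * pi)) *
        (sgn (x - a * y) *\<^sub>R exp (- (((complex_of_real x - \<zeta>) / complex_of_real s)^2)))" for x
    unfolding K_def \<zeta>_def s_def by (rule T_op_integrand_gfun[OF a])
  have arg: "(\<zeta> - complex_of_real (a * y)) / complex_of_real s = erf_point a \<mu> \<omega>"
  proof -
    have "sqrt a > 0" "sqrt a * sqrt a = a" "s = sqrt 2 * sqrt a"
      using a by (auto simp: s_def real_sqrt_mult)
    then show ?thesis
      unfolding \<zeta>_def erf_point_def by (simp add: complex_eq_iff field_simps)
  qed
  have const: "2 * complex_of_real s / complex_of_real (sqrt (2 * pi))
      = complex_of_real (sqrt a) * (2 / complex_of_real (sqrt pi))"
    by (simp add: s_def real_sqrt_mult field_simps flip: of_real_mult)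
  have "T_op a (gfun \<mu> (a / (1 - a)) \<omega>) y = exp K / complex_of_real (sqrt (2 * pi)) *
      (LINT x|lborel. sgn (x - a * y) *\<^sub>R exp (- (((complex_of_real x - \<zeta>) / complex_of_real s)^2)))"
    unfolding T_op_def kernel by (rule integral_mult_right_zero)
  also have "\<dots> = exp K * (2 * complex_of_real s / complex_of_real (sqrt (2 * pi))) * gauss_prim (erf_point a \<mu> \<omega>)"
    unfolding lborel_integral_sgn_complex_gauss[OF \<open>s > 0\<close>] arg by (simp add: field_simps)
  finally show ?thesis
    unfolding const cerf_eq_gauss_prim by (simp add: mult_ac)
qed

lemma gfun_in_null_L1:
  assumes "0 < a" "a < 1" and "cerf (erf_point a \<mu> \<omega>) = 0"
  shows "gfun \<mu> (a / (1 - a)) \<omega> \<in> null_L1 a"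
  using assms integrable_gfun[of "a / (1 - a)"] by (simp add: null_L1_def T_op_gfun)

lemma integrable_T_op_integrand:
  assumes "integrable lborel f"
  shows "integrable lborel (\<lambda>x. complex_of_real (sgn (x - a * y) * gauss_pdf (y - x)) * f x)"
proof -
  have "gauss_pdf t \<le> 1" for t
  proof -
    have "exp (- (t^2) / 2) \<le> 1" "1 \<le> sqrt (2 * pi)"
      using pi_gt3 by auto
    then show ?thesis
      unfolding gauss_pdf_def by (meson divide_le_eq_1 exp_gt_zero less_le_trans not_less zero_less_one)
  qed
  then have "\<bar>sgn (x - a * y) * gauss_pdf (y - x)\<bar> \<le> 1" for x
    by (simp add: abs_mult sgn_real_def gauss_pdf_def)
  then show ?thesis
    using integrable_bounded_scaleR[OF assms, of "\<lambda>x. sgn (x - a * y) * gauss_pdf (y - x)" 1]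
    by (simp add: scaleR_conv_of_real gauss_pdf_def)
qed

lemma T_op_sum:
  assumes "finite F" and "\<And>g. g \<in> F \<Longrightarrow> integrable lborel g"
  shows "T_op a (\<lambda>x. \<Sum>g\<in>F. c g * g x) y = (\<Sum>g\<in>F. c g * T_op a g y)"
proof -
  have "T_op a (\<lambda>x. \<Sum>g\<in>F. c g * g x) y
      = (LINT x|lborel. (\<Sum>g\<in>F. c g * (complex_of_real (sgn (x - a * y) * gauss_pdf (y - x)) * g x)))"
    unfolding T_op_def by (simp add: sum_distrib_left mult_ac)
  also have "\<dots> = (\<Sum>g\<in>F. c g * T_op a g y)"
    unfolding T_op_def using assms integrable_T_op_integrand by simp
  finally show ?thesis .
qed

lemma cspan_subset_null_L1:
  assumes "S \<subseteq> null_L1 a"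
  shows "cspan S \<subseteq> null_L1 a"
proof
  fix f assume "f \<in> cspan S"
  then obtain F c where f: "f = (\<lambda>x. \<Sum>g\<in>F. c g * g x)" and F: "finite F" "F \<subseteq> S"
    unfolding cspan_def by blast
  then have "\<And>g. g \<in> F \<Longrightarrow> integrable lborel g" "\<And>g y. g \<in> F \<Longrightarrow> T_op a g y = 0"
    using assms by (auto simp: null_L1_def)
  with F show "f \<in> null_L1 a"
    unfolding f null_L1_def by (simp add: T_op_sum)
qed

section \<open>Zeros of the error function\<close>

lemma norm_le_of_norm_div_reflect_le_half:
  fixes w :: complex
  assumes "norm (w / (2 * complex_of_real M - w)) \<le> 1 / 2" "2 * complex_of_real M - w \<noteq> 0"
  shows "norm w \<le> 2 * \<bar>M\<bar>"
proof -
  have "norm w \<le> norm (2 * complex_of_real M - w) / 2"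
    using assms by (simp add: norm_divide divide_le_eq)
  also have "\<dots> \<le> (2 * \<bar>M\<bar> + norm w) / 2"
    using norm_triangle_ineq4[of "2 * complex_of_real M" w] by (simp add: norm_mult)
  finally show ?thesis
    by simp
qed

lemma norm_lt_norm_reflect:
  fixes w :: complex
  assumes "Re w < M" "0 < M"
  shows "norm w < norm (2 * complex_of_real M - w)"
proof -
  have "(norm w)^2 < (norm (2 * complex_of_real M - w))^2"
    using assms by (simp only: cmod_power2) (simp add: power2_eq_square algebra_simps)
  then show ?thesis
    by (rule power2_less_imp_less) simp
qed

lemma Borel_Caratheodory:
  fixes h :: "complex \<Rightarrow> complex"
  assumes hol: "h holomorphic_on UNIV" and h0: "h 0 = 0" and "R > 0" "M > 0"
    and Re_lt: "\<And>w. norm w \<le> R \<Longrightarrow> Re (h w) < M" and z: "norm z \<le> R / 2"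
  shows "norm (h z) \<le> 2 * M"
proof -
  have lt: "norm (h w) < norm (2 * complex_of_real M - h w)" if "norm w \<le> R" for w
    using norm_lt_norm_reflect[OF Re_lt[OF that] \<open>M > 0\<close>] .
  \<comment> \<open>\<phi> maps the unit disc into itself and fixes 0, so Schwarz's lemma applies at z / R.\<close>
  define \<phi> where "\<phi> \<xi> = h (complex_of_real R * \<xi>) / (2 * complex_of_real M - h (complex_of_real R * \<xi>))" for \<xi>
  have in_disc: "norm (complex_of_real R * \<xi>) \<le> R" if "norm \<xi> \<le> 1" for \<xi>
    using that \<open>R > 0\<close> by (simp add: norm_mult mult_left_le)
  have den: "2 * complex_of_real M - h (complex_of_real R * \<xi>) \<noteq> 0" if "norm \<xi> \<le> 1" for \<xi>
    using lt[OF in_disc[OF that]] by auto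
  have "\<phi> holomorphic_on ball 0 1"
    unfolding \<phi>_def
    by (intro holomorphic_intros holomorphic_on_compose_gen[OF _ hol, unfolded o_def] den) auto
  moreover have "\<phi> 0 = 0"
    by (simp add: \<phi>_def h0)
  moreover have "norm (\<phi> \<xi>) < 1" if "norm \<xi> < 1" for \<xi>
    using lt[OF in_disc] that by (simp add: \<phi>_def norm_divide divide_less_eq)
  moreover have "norm (z / complex_of_real R) \<le> 1 / 2"
    using \<open>R > 0\<close> z by (simp add: norm_divide divide_le_eq)
  ultimately have "norm (\<phi> (z / complex_of_real R)) \<le> 1 / 2"
    using Schwarz_Lemma(1)[of \<phi> "z / complex_of_real R"] by fastforce
  then have "norm (h z / (2 * complex_of_real M - h z)) \<le> 1 / 2"
    using \<open>R > 0\<close> by (simp add: \<phi>_def)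
  moreover have "2 * complex_of_real M - h z \<noteq> 0"
    using den[of "z / complex_of_real R"] \<open>R > 0\<close> z by (simp add: norm_divide divide_le_eq)
  ultimately show ?thesis
    using norm_le_of_norm_div_reflect_le_half \<open>M > 0\<close> by fastforce
qed

lemma entire_quadratic_of_Re_le:
  fixes g :: "complex \<Rightarrow> complex"
  assumes hol: "g holomorphic_on UNIV" and "B \<ge> 0" and Re_le: "\<And>z. Re (g z) \<le> A + B * norm z ^ 2"
  obtains c0 c1 c2 where "\<And>z. g z = c0 + c1 * z + c2 * z^2"
proof -
  define A' where "A' = \<bar>A\<bar> + norm (g 0)"
  have Re_diff: "Re (g z - g 0) \<le> A' + B * norm z ^ 2" for z
    using Re_le[of z] abs_Re_le_cmod[of "g 0"] by (simp add: A'_def)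
  have h_le: "norm (g z - g 0) \<le> 2 * (A' + 4 * B * norm z ^ 2 + 1)" if "1 \<le> norm z" for z
  proof (rule Borel_Caratheodory[where h = "\<lambda>w. g w - g 0" and R = "2 * norm z"])
    show "Re (g w - g 0) < A' + 4 * B * norm z ^ 2 + 1" if "norm w \<le> 2 * norm z" for w
    proof -
      have "B * norm w ^ 2 \<le> B * (2 * norm z) ^ 2"
        using that \<open>B \<ge> 0\<close> by (intro mult_left_mono power_mono) auto
      then show ?thesis
        using Re_diff[of w] by (simp add: power_mult_distrib)
    qed
  qed (use that \<open>B \<ge> 0\<close> in \<open>auto intro!: holomorphic_intros hol add_nonneg_pos simp: A'_def\<close>)
  define C where "C = norm (g 0) + 2 * A' + 2 + 8 * B"
  have g_le: "norm (g z) \<le> C * norm z ^ 2" if "1 \<le> norm z" for z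
  proof -
    have "norm (g z) \<le> norm (g 0) + norm (g z - g 0)"
      by (metis add.commute diff_add_cancel norm_triangle_ineq)
    also have "\<dots> \<le> (norm (g 0) + 2 * A' + 2) * 1 + 8 * B * norm z ^ 2"
      using h_le[OF that] by simp
    also have "\<dots> \<le> (norm (g 0) + 2 * A' + 2) * norm z ^ 2 + 8 * B * norm z ^ 2"
      using that by (intro add_right_mono mult_left_mono) (auto simp: A'_def one_le_power)
    finally show ?thesis
      by (simp add: C_def algebra_simps)
  qed
  define c where "c k = (deriv ^^ k) g 0 / fact k" for k
  from Liouville_polynomial[OF hol g_le] have "g z = (\<Sum>k\<le>2. c k * z ^ k)" for z
    by (simp add: c_def)
  then show ?thesis
    by (intro that[of "c 0" "c 1" "c 2"]) (simp add: numeral_2_eq_2 atMost_Suc)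
qed

lemma zero_free_entire_exp_quadratic:
  fixes R :: "complex \<Rightarrow> complex"
  assumes hol: "R holomorphic_on UNIV" and nz: "\<And>z. R z \<noteq> 0" and "B \<ge> 0"
    and bound: "\<And>z. norm (R z) \<le> K * exp (B * norm z ^ 2)"
  obtains c0 c1 c2 where "\<And>z. R z = exp (c0 + c1 * z + c2 * z^2)"
proof -
  have "\<exists>g. g holomorphic_on UNIV \<and> (\<forall>z. R z = exp (g z))"
    by (rule contractible_imp_holomorphic_log[OF hol contractible_UNIV]) (use nz in auto)
  then obtain g where g: "g holomorphic_on UNIV" and R_eq: "\<And>z. R z = exp (g z)"
    by blast
  have "0 < norm (R 0)"
    using nz by simp
  also have "norm (R 0) \<le> K"
    using bound[of 0] by simp
  finally have "K > 0" .
  have Re_g: "Re (g z) \<le> ln K + B * norm z ^ 2" for z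
  proof -
    have "exp (Re (g z)) \<le> exp (ln K + B * norm z ^ 2)"
      using bound[of z] \<open>K > 0\<close> by (simp add: R_eq norm_exp_eq_Re exp_add)
    then show ?thesis
      by simp
  qed
  obtain c0 c1 c2 where "\<And>z. g z = c0 + c1 * z + c2 * z^2"
    using entire_quadratic_of_Re_le[OF g \<open>B \<ge> 0\<close> Re_g] by metis
  then show ?thesis
    by (intro that) (simp add: R_eq)
qed

lemma entire_factor_zeros:
  fixes f :: "complex \<Rightarrow> complex"
  assumes hol: "f holomorphic_on UNIV" and "finite Z" and zeros: "\<And>w. w \<in> Z \<Longrightarrow> f w = 0"
  obtains R where "R holomorphic_on UNIV" "\<And>z. f z = poly (\<Prod>w\<in>Z. [:- w, 1:]) z * R z"
  using assms(2,3) that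
proof (induction Z arbitrary: thesis rule: finite_induct)
  case empty
  then show ?case
    using hol by simp
next
  case (insert w Z)
  then obtain R0 where R0: "R0 holomorphic_on UNIV" "\<And>z. f z = poly (\<Prod>w\<in>Z. [:- w, 1:]) z * R0 z"
    by blast
  have "poly (\<Prod>u\<in>Z. [:- u, 1:]) w \<noteq> 0"
    using insert.hyps by (auto simp: poly_prod)
  then have "R0 w = 0"
    using R0(2)[of w] insert.prems(2)[of w] by simp
  define R where "R z = (if z = w then deriv R0 w else (R0 z - R0 w) / (z - w))" for z
  have "R holomorphic_on UNIV"
    unfolding R_def by (rule pole_lemma[OF R0(1)]) auto
  moreover have "R0 z = (z - w) * R z" for z
    using \<open>R0 w = 0\<close> by (simp add: R_def)
  then have "f z = poly (\<Prod>u\<in>insert w Z. [:- u, 1:]) z * R z" for z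
    using R0(2)[of z] insert.hyps by (simp add: poly_prod mult_ac left_diff_distrib)
  ultimately show ?case
    by (rule insert.prems(1))
qed

lemma norm_prod_diff_ge_1:
  fixes z :: complex
  assumes "finite Z" and "1 + (\<Sum>w\<in>Z. norm w) \<le> norm z"
  shows "1 \<le> norm (poly (\<Prod>w\<in>Z. [:- w, 1:]) z)"
  unfolding poly_prod prod_norm[symmetric]
proof (rule prod_ge_1)
  fix w assume "w \<in> Z"
  then have "norm w \<le> (\<Sum>w\<in>Z. norm w)"
    using assms(1) by (intro member_le_sum) auto
  then show "1 \<le> norm (poly [:- w, 1:] z)"
    using assms(2) norm_triangle_ineq2[of z w] by simp
qed

lemma continuous_bound_exp_sq:
  fixes R :: "complex \<Rightarrow> complex"
  assumes "continuous_on UNIV R" and "B \<ge> 0" and far: "\<And>z. r \<le> norm z \<Longrightarrow> norm (R z) \<le> exp (B * norm z ^ 2)"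
  obtains K where "\<And>z. norm (R z) \<le> K * exp (B * norm z ^ 2)"
proof -
  have "compact (R ` cball 0 r)"
    by (rule compact_continuous_image[OF continuous_on_subset[OF assms(1)]]) auto
  then obtain b where "\<forall>y \<in> R ` cball 0 r. norm y \<le> b"
    using compact_imp_bounded bounded_iff by blast
  then have b: "\<And>z. z \<in> cball 0 r \<Longrightarrow> norm (R z) \<le> b"
    by blast
  have "norm (R z) \<le> max 1 b * exp (B * norm z ^ 2)" for z
  proof (cases "r \<le> norm z")
    case True
    then have "norm (R z) \<le> 1 * exp (B * norm z ^ 2)"
      using far by simp
    also have "\<dots> \<le> max 1 b * exp (B * norm z ^ 2)"
      by (intro mult_right_mono) auto
    finally show ?thesis .
  next
    case False
    then have "norm (R z) \<le> max 1 b * 1"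
      using b[of z] by simp
    also have "\<dots> \<le> max 1 b * exp (B * norm z ^ 2)"
      using assms(2) by (intro mult_left_mono) auto
    finally show ?thesis .
  qed
  then show ?thesis
    by (rule that)
qed

lemma exp_quadratic_eq_gauss_imp_coeff:
  fixes L0 c0 c1 c2 :: complex
  assumes eq: "\<And>z. L0 * exp (c0 + c1 * z + c2 * z^2) = exp (- (z^2))"
  shows "c2 = -1"
proof -
  have "((\<lambda>z. L0 * exp (c0 + c1 * z + c2 * z^2)) has_field_derivative
      L0 * exp (c0 + c1 * z + c2 * z^2) * (c1 + 2 * c2 * z)) (at z)" for z
    by (auto intro!: derivative_eq_intros simp: algebra_simps)
  moreover have "((\<lambda>z. exp (- (z^2))) has_field_derivative exp (- (z^2)) * (- 2 * z)) (at z)" for z :: complex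
    by (auto intro!: derivative_eq_intros)
  ultimately have "exp (- (z^2)) * (c1 + 2 * c2 * z) = exp (- (z^2)) * (- 2 * z)" for z
    unfolding eq using DERIV_unique by metis
  then have "c1 + 2 * c2 * z = - 2 * z" for z
    by (metis exp_not_eq_zero mult_left_cancel)
  from this[of 0] this[of 1] show ?thesis
    by simp
qed

lemma has_field_derivative_poly_mult_at_common_zero:
  assumes "R holomorphic_on UNIV" and "poly P z = 0" and "R z = 0"
  shows "((\<lambda>z. poly P z * R z) has_field_derivative 0) (at z)"
proof -
  have "((\<lambda>z. poly P z * R z) has_field_derivative poly (pderiv P) z * R z + poly P z * deriv R z) (at z)"
    using assms(1) by (auto intro!: derivative_eq_intros poly_DERIV holomorphic_derivI)
  with assms(2,3) show ?thesis
    by simp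
qed

lemma gauss_prim_ne_poly_mult_exp_quadratic:
  assumes "P \<noteq> 0"
  shows "\<not> (\<forall>z. gauss_prim z = poly P z * exp (c0 + c1 * z + c2 * z^2))"
proof
  assume eq: "\<forall>z. gauss_prim z = poly P z * exp (c0 + c1 * z + c2 * z^2)"
  define q where "q z = c0 + c1 * z + c2 * z^2" for z
  have dq: "(q has_field_derivative c1 + 2 * c2 * z) (at z)" for z
    unfolding q_def by (auto intro!: derivative_eq_intros)
  \<comment> \<open>L e^q = exp(-z^2), so L has no zeros and is constant; then q' = -2z forces deg L = deg P + 1.\<close>
  define L where "L = pderiv P + P * [:c1, 2 * c2:]"
  have L_exp: "poly L z * exp (q z) = exp (- (z^2))" for z
  proof -
    have "((\<lambda>z. poly P z * exp (q z)) has_field_derivative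
        poly (pderiv P) z * exp (q z) + poly P z * (exp (q z) * (c1 + 2 * c2 * z))) (at z)"
      by (rule DERIV_cong[OF DERIV_mult[OF poly_DERIV DERIV_chain2[OF DERIV_exp dq]]]) (simp add: mult_ac)
    moreover have "gauss_prim = (\<lambda>z. poly P z * exp (q z))"
      using eq by (simp add: q_def fun_eq_iff)
    ultimately have "exp (- (z^2)) = poly (pderiv P) z * exp (q z) + poly P z * (exp (q z) * (c1 + 2 * c2 * z))"
      using DERIV_unique[OF DERIV_gauss_prim[of z]] by simp
    then show ?thesis
      by (simp add: L_def algebra_simps)
  qed
  then have "poly L z \<noteq> 0" for z
    by (metis exp_not_eq_zero mult_zero_left)
  then have "constant (poly L)"
    using fundamental_theorem_of_algebra by blast
  then have "poly L z = poly L 0" for z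
    by (simp add: constant_def)
  with L_exp have "poly L 0 * exp (q z) = exp (- (z^2))" for z
    by metis
  then have "c2 = -1"
    unfolding q_def by (rule exp_quadratic_eq_gauss_imp_coeff)
  then have "degree L = degree P + 1"
    using assms by (simp add: L_def degree_add_eq_right degree_mult_eq degree_pderiv)
  moreover have "degree L = 0"
    using \<open>constant (poly L)\<close> constant_degree by blast
  ultimately show False
    by simp
qed

lemma gauss_prim_zeros_infinite: "infinite {z. gauss_prim z = 0}"
proof
  define Z where "Z = {z. gauss_prim z = 0}"
  define P where "P = (\<Prod>w\<in>Z. [:- w, 1:])"
  assume "finite {z. gauss_prim z = 0}"
  then have "finite Z"
    by (simp add: Z_def)
  then have "P \<noteq> 0"
    by (simp add: P_def)
  obtain R where R: "R holomorphic_on UNIV" and factor: "\<And>z. gauss_prim z = poly P z * R z"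
    using entire_factor_zeros[OF holomorphic_gauss_prim \<open>finite Z\<close>] by (auto simp: Z_def P_def)
  \<comment> \<open>the zeros of gauss_prim are simple\<close>
  have "R z \<noteq> 0" for z :: complex
  proof
    assume "R z = 0"
    moreover from this have "poly P z = 0"
      using factor[of z] \<open>finite Z\<close> by (simp add: Z_def P_def poly_prod)
    ultimately have "(gauss_prim has_field_derivative 0) (at z)"
      using has_field_derivative_poly_mult_at_common_zero[OF R] factor by presburger
    then have "exp (- (z^2)) = 0"
      by (rule DERIV_unique[OF DERIV_gauss_prim])
    then show False
      by simp
  qed
  moreover obtain K where "\<And>z. norm (R z) \<le> K * exp (2 * norm z ^ 2)"
  proof (rule continuous_bound_exp_sq)
    show "continuous_on UNIV R"
      using R by (rule holomorphic_on_imp_continuous_on)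
    fix z :: complex assume "1 + (\<Sum>w\<in>Z. norm w) \<le> norm z"
    then have "norm (R z) \<le> norm (poly P z) * norm (R z)"
      using norm_prod_diff_ge_1[OF \<open>finite Z\<close>] by (simp add: P_def mult_le_cancel_right1)
    also have "\<dots> \<le> exp (2 * norm z ^ 2)"
      using norm_gauss_prim_le[of z] by (simp add: factor norm_mult)
    finally show "norm (R z) \<le> exp (2 * norm z ^ 2)" .
  qed auto
  ultimately obtain c0 c1 c2 where "\<And>z. R z = exp (c0 + c1 * z + c2 * z^2)"
    using zero_free_entire_exp_quadratic[OF R] by (metis zero_le_numeral)
  with factor gauss_prim_ne_poly_mult_exp_quadratic[OF \<open>P \<noteq> 0\<close>] show False
    by auto
qed

lemma cerf_zeros_infinite: "infinite {z. cerf z = 0}"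
  using gauss_prim_zeros_infinite by (simp add: cerf_eq_gauss_prim)

section \<open>Linear independence of Gaussians\<close>

lemma sum_exp_eq_0_imp_coeffs_0:
  fixes lam d :: "nat \<Rightarrow> complex"
  assumes "inj_on lam {..<n}" and "\<And>x::real. (\<Sum>i<n. d i * exp (lam i * complex_of_real x)) = 0"
  shows "\<forall>i<n. d i = 0"
  using assms
proof (induction n arbitrary: lam d)
  case 0
  then show ?case by simp
next
  case (Suc n)
  \<comment> \<open>dividing by e^(lam n x) and differentiating removes the n-th term\<close>
  define F where "F z = (\<Sum>i<Suc n. d i * exp ((lam i - lam n) * z))" for z
  have "F (complex_of_real x) = exp (- lam n * complex_of_real x) * (\<Sum>i<Suc n. d i * exp (lam i * complex_of_real x))" for x
    unfolding F_def by (simp add: sum_distrib_left algebra_simps exp_diff exp_minus field_simps)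
  then have F0: "F (complex_of_real x) = 0" for x
    using Suc.prems(2) by simp
  have "(F has_field_derivative (\<Sum>i<Suc n. d i * ((lam i - lam n) * exp ((lam i - lam n) * z)))) (at z)" for z
    unfolding F_def by (auto intro!: derivative_eq_intros sum.cong simp: algebra_simps)
  then have "((\<lambda>x. F (complex_of_real x)) has_vector_derivative
      (\<Sum>i<Suc n. d i * ((lam i - lam n) * exp ((lam i - lam n) * complex_of_real x)))) (at x)" for x
    by (rule has_vector_derivative_real_field)
  moreover have "((\<lambda>x. F (complex_of_real x)) has_vector_derivative 0) (at x)" for x
    using F0 by simp
  ultimately have "(\<Sum>i<Suc n. d i * ((lam i - lam n) * exp ((lam i - lam n) * complex_of_real x))) = 0" for x
    using vector_derivative_unique_at by blast
  then have "(\<Sum>i<n. (d i * (lam i - lam n)) * exp ((lam i - lam n) * complex_of_real x)) = 0" for x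
    by (simp add: mult_ac)
  moreover have "inj_on (\<lambda>i. lam i - lam n) {..<n}"
    using Suc.prems(1) by (auto simp: inj_on_def)
  ultimately have "\<forall>i<n. d i * (lam i - lam n) = 0"
    by (intro Suc.IH)
  moreover have "lam i \<noteq> lam n" if "i < n" for i
    using Suc.prems(1) that unfolding inj_on_def by force
  ultimately have d: "\<forall>i<n. d i = 0"
    by auto
  then have "d n = 0"
    using Suc.prems(2)[of 0] by simp
  with d show ?case
    using less_Suc_eq by auto
qed

lemma continuous_AE_eq_0_imp_eq_0:
  fixes f :: "real \<Rightarrow> 'a::real_normed_vector"
  assumes "continuous_on UNIV f" and "AE x in lborel. f x = 0"
  shows "f x = 0"
proof (rule ccontr)
  assume "f x \<noteq> 0"
  moreover have "open (f -` (- {0}))"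
    using assms(1) by (intro open_vimage) auto
  ultimately obtain e where e: "e > 0" "ball x e \<subseteq> f -` (- {0})"
    using open_contains_ball by blast
  from AE_E[OF assms(2)] obtain N where N: "{y \<in> space lborel. f y \<noteq> 0} \<subseteq> N"
      "emeasure lborel N = 0" "N \<in> sets lborel" by blast
  have "ball x e \<subseteq> N"
    using e N by auto
  then have "emeasure lborel (ball x e) \<le> emeasure lborel N"
    using N by (intro emeasure_mono) auto
  moreover have "ball x e = {x - e <..< x + e}"
    by (auto simp: ball_def dist_real_def)
  ultimately show False
    using N e by simp
qed

lemma gfun_eq_exp_linear:
  assumes "s2 > 0"
  shows "gfun \<mu> s2 \<omega> x = complex_of_real (exp (- (x^2) / (2 * s2))) *
    (complex_of_real (exp (- (\<mu>^2) / (2 * s2))) *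
     exp ((complex_of_real (\<mu> / s2) + \<i> * complex_of_real \<omega>) * complex_of_real x))"
proof -
  have "complex_of_real (- ((x - \<mu>)^2) / (2 * s2)) + \<i> * complex_of_real (x * \<omega>)
      = complex_of_real (- (x^2) / (2 * s2)) + (complex_of_real (- (\<mu>^2) / (2 * s2)) +
        (complex_of_real (\<mu> / s2) + \<i> * complex_of_real \<omega>) * complex_of_real x)"
    using assms by (simp add: complex_eq_iff power2_eq_square field_simps)
  then show ?thesis
    unfolding gfun_def by (simp only: exp_add[symmetric] exp_of_real[symmetric])
qed

lemma gfun_linear_independent:
  fixes \<mu> \<omega> :: "nat \<Rightarrow> real" and c :: "nat \<Rightarrow> complex"
  assumes "s2 > 0" and inj: "inj_on (\<lambda>i. (\<mu> i, \<omega> i)) {..<n}"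
    and "AE x in lborel. (\<Sum>i<n. c i * gfun (\<mu> i) s2 (\<omega> i) x) = 0"
  shows "\<forall>i<n. c i = 0"
proof -
  define lam where "lam i = complex_of_real (\<mu> i / s2) + \<i> * complex_of_real (\<omega> i)" for i
  define d where "d i = c i * complex_of_real (exp (- (\<mu> i ^ 2) / (2 * s2)))" for i
  have "continuous_on UNIV (\<lambda>x. \<Sum>i<n. c i * gfun (\<mu> i) s2 (\<omega> i) x)"
    using \<open>s2 > 0\<close> unfolding gfun_def by (intro continuous_intros) auto
  from continuous_AE_eq_0_imp_eq_0[OF this assms(3)]
  have "complex_of_real (exp (- (x^2) / (2 * s2))) * (\<Sum>i<n. d i * exp (lam i * complex_of_real x)) = 0" for x
    using \<open>s2 > 0\<close> by (simp add: gfun_eq_exp_linear lam_def d_def sum_distrib_left mult_ac)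
  then have "(\<Sum>i<n. d i * exp (lam i * complex_of_real x)) = 0" for x
    by simp
  moreover have "inj_on lam {..<n}"
    using inj \<open>s2 > 0\<close> by (auto simp: inj_on_def lam_def complex_eq_iff)
  ultimately have "\<forall>i<n. d i = 0"
    by (intro sum_exp_eq_0_imp_coeffs_0)
  then show ?thesis
    by (simp add: d_def)
qed

lemma infinite_erf_point_zeros:
  assumes "0 < a" "a < 1"
  shows "infinite {(\<mu>, \<omega>). cerf (erf_point a \<mu> \<omega>) = 0}"
proof
  define p where "p z = (sqrt 2 * sqrt a / (1 - a) * Re z, sqrt 2 / sqrt a * Im z)" for z
  have erf_point_p: "case_prod (erf_point a) (p z) = z" for z
  proof -
    have "sqrt a > 0" "sqrt 2 > 0" "sqrt 2 * sqrt 2 = 2"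
      using assms by auto
    then show ?thesis
      using assms by (simp add: p_def erf_point_def complex_eq_iff field_simps)
  qed
  then have "inj p"
    by (metis injI)
  moreover have "p ` {z. cerf z = 0} \<subseteq> {(\<mu>, \<omega>). cerf (erf_point a \<mu> \<omega>) = 0}"
    using erf_point_p by (simp add: image_subset_iff case_prod_beta)
  moreover assume "finite {(\<mu>, \<omega>). cerf (erf_point a \<mu> \<omega>) = 0}"
  ultimately have "finite {z. cerf z = 0}"
    by (metis finite_imageD finite_subset inj_on_subset subset_UNIV)
  with cerf_zeros_infinite show False ..
qed

theorem theorem8:
  fixes a :: real
  assumes "0 < a" and "a < 1"
  shows "(\<forall>n::nat. \<exists>fs :: nat \<Rightarrow> real \<Rightarrow> complex.
            (\<forall>i<n. fs i \<in> null_L1 a) \<and>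
            (\<forall>c :: nat \<Rightarrow> complex.
               (AE x in lborel. (\<Sum>i<n. c i * fs i x) = 0) \<longrightarrow> (\<forall>i<n. c i = 0)))
       \<and> cspan {gfun \<mu> (a / (1 - a)) \<omega> | \<mu> \<omega>.
                 cerf ((1 / complex_of_real (sqrt 2)) *
                       (complex_of_real ((1 - a) / sqrt a * \<mu>) + \<i> * complex_of_real (sqrt a * \<omega>))) = 0}
         \<subseteq> null_L1 a"
  unfolding erf_point_def[symmetric]
proof
  obtain p :: "nat \<Rightarrow> real \<times> real" where "inj p" and p: "range p \<subseteq> {(\<mu>, \<omega>). cerf (erf_point a \<mu> \<omega>) = 0}"
    using infinite_countable_subset[OF infinite_erf_point_zeros[OF assms]] by blast
  define fs where "fs i = gfun (fst (p i)) (a / (1 - a)) (snd (p i))" for i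
  have null: "fs i \<in> null_L1 a" for i
    using assms p by (auto simp: fs_def case_prod_beta image_subset_iff intro!: gfun_in_null_L1)
  have indep: "\<forall>i<n. c i = 0" if "AE x in lborel. (\<Sum>i<n. c i * fs i x) = 0" for n c
  proof (rule gfun_linear_independent)
    show "inj_on (\<lambda>i. (fst (p i), snd (p i))) {..<n}"
      using inj_on_subset[OF \<open>inj p\<close> subset_UNIV] by simp
  qed (use assms that in \<open>simp_all add: fs_def\<close>)
  show "\<forall>n::nat. \<exists>fs. (\<forall>i<n. fs i \<in> null_L1 a) \<and>
      (\<forall>c. (AE x in lborel. (\<Sum>i<n. c i * fs i x) = 0) \<longrightarrow> (\<forall>i<n. c i = 0))"
    using null indep by blast
next
  show "cspan {gfun \<mu> (a / (1 - a)) \<omega> | \<mu> \<omega>. cerf (erf_point a \<mu> \<omega>) = 0} \<subseteq> null_L1 a"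
    using assms by (intro cspan_subset_null_L1) (auto intro!: gfun_in_null_L1)
qed

end
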